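(* Let $X$ be a real Banach space, $0<\delta\le2$, and $D\subset X$ dense. Then $X$ has the LD$\delta$P if and only if for every $\varepsilon>0$ and every $z\in D$, either $\|z\|\ge1$ or $$z\in\overline{\mathrm{co}}_{\mathbb{Q}}\Big\{\tfrac{x+y}{2}: x,y\in \operatorname{int}(B_X)\cap D,\ \|x-y\|>\delta-\varepsilon\Big\}.$$
   Context: $X$ has the local diameter $\delta$ property (LD$\delta$P) if every slice $S(B_X,f,\alpha)=\{x\in B_X:f(x)>1-\alpha\}$ ($f\in S_{X^*}$, $\alpha>0$) has diameter $\ge\delta$. For $A\subset X$, $\overline{\mathrm{co}}_{\mathbb{Q}}(A)$ denotes the norm closure of the set of all convex combinations of elements of $A$ with rational coefficients. $\operatorname{int}(B_X)$ is the open unit ball. *)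

theory Defs
  imports "HOL-Analysis.Analysis"
begin

definition slice :: "('a::real_normed_vector \<Rightarrow> real) \<Rightarrow> real \<Rightarrow> 'a set" where
  "slice f \<alpha> = {x. norm x \<le> 1 \<and> f x > 1 - \<alpha>}"

definition LDP :: "real \<Rightarrow> 'a::real_normed_vector itself \<Rightarrow> bool" where
  "LDP \<delta> _ \<longleftrightarrow> (\<forall>(f::'a \<Rightarrow> real) \<alpha>. bounded_linear f \<and> onorm f = 1 \<and> \<alpha> > 0
      \<longrightarrow> diameter (slice f \<alpha>) \<ge> \<delta>)"

definition rat_convex_hull :: "'a::real_vector set \<Rightarrow> 'a set" where
  "rat_convex_hull A = {y. \<exists>I::nat set. \<exists>c x. finite I \<and> (\<forall>i\<in>I. c i \<in> \<rat> \<and> c i \<ge> 0 \<and> x i \<in> A)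
      \<and> sum c I = 1 \<and> y = (\<Sum>i\<in>I. c i *\<^sub>R x i)}"

definition closed_rat_convex_hull :: "'a::real_normed_vector set \<Rightarrow> 'a set" where
  "closed_rat_convex_hull A = closure (rat_convex_hull A)"

end

theory Submission
  imports Defs
begin

text \<open>
  If some z with norm z < 1 were not in the closed rational convex hull of the midpoints of far
  apart pairs, a Hahn-Banach functional g of norm one would separate z from that convex set,
  say g \<le> c := g z < 1 on it. By LD\<delta>P the slice {g > c} contains two points at distance almost
  \<delta>; moving them slightly into the open ball and into D, their midpoint still has g > c,
  a contradiction. Conversely, for a slice S(f, \<alpha>) pick z \<in> D in the open ball with
  f z > 1 - \<alpha>/2. Since z lies in the closed hull and {f > 1 - \<alpha>/2} is an open half-space, some
  midpoint (x + y)/2 with norm (x - y) > \<delta> - \<epsilon> satisfies f > 1 - \<alpha>/2, and as f \<le> 1 on the ball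
  this forces x, y \<in> S(f, \<alpha>).
\<close>

section \<open>Hahn-Banach for sublinear functionals\<close>

lemma sublinear_scale_ge:
  fixes p :: "'a::real_vector \<Rightarrow> real"
  assumes sub: "\<And>x y. p (x + y) \<le> p x + p y"
    and hom: "\<And>x t. t > 0 \<Longrightarrow> p (t *\<^sub>R x) = t * p x"
  shows "t * p x \<le> p (t *\<^sub>R x)"
proof -
  have p0: "p 0 = 0"
    using hom[of 2 0] by simp
  consider "t > 0" | "t = 0" | "t < 0"
    by linarith
  then show ?thesis
  proof cases
    case 3
    have "0 \<le> p (t *\<^sub>R x) + p ((- t) *\<^sub>R x)"
      using sub[of "t *\<^sub>R x" "(- t) *\<^sub>R x"] p0 by (simp add: scaleR_left_distrib[symmetric])
    with 3 show ?thesis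
      using hom[of "- t" x] by simp
  qed (use hom p0 in auto)
qed

lemma sublinear_extension_step:
  fixes p :: "'a::real_vector \<Rightarrow> real"
  assumes sub: "\<And>x y. p (x + y) \<le> p x + p y"
    and hom: "\<And>x t. t > 0 \<Longrightarrow> p (t *\<^sub>R x) = t * p x"
    and M: "subspace M" and dom: "\<And>x a. (x, a) \<in> M \<Longrightarrow> a \<le> p x"
  shows "\<exists>c. \<forall>(x, a) \<in> M. \<forall>t. a + t * c \<le> p (x + t *\<^sub>R y)"
proof -
  have scale: "(t *\<^sub>R x, t * a) \<in> M" if "(x, a) \<in> M" for x a t
    using subspace_scale[OF M that, of t] by simp
  define S where "S = {a - p (x - y) | x a. (x, a) \<in> M}"
  have S_le: "s \<le> p (x' + y) - a'" if "s \<in> S" "(x', a') \<in> M" for s x' a'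
  proof -
    obtain x a where s: "s = a - p (x - y)" and xa: "(x, a) \<in> M"
      using \<open>s \<in> S\<close> by (auto simp: S_def)
    have "a + a' \<le> p (x + x')"
      using dom subspace_add[OF M xa that(2)] by simp
    also have "\<dots> \<le> p (x - y) + p (x' + y)"
      using sub[of "x - y" "x' + y"] by simp
    finally show ?thesis
      using s by simp
  qed
  have "(0, 0) \<in> M"
    using subspace_0[OF M] by (simp add: zero_prod_def)
  then have "S \<noteq> {}" "bdd_above S"
    using S_le[of _ 0 0] by (auto simp: S_def intro!: bdd_aboveI[of _ "p y"])
  define c where "c = Sup S"
  have c_ge: "a - p (x - y) \<le> c" if "(x, a) \<in> M" for x a
    unfolding c_def using that \<open>bdd_above S\<close> by (intro cSup_upper) (auto simp: S_def)
  have c_le: "c \<le> p (x + y) - a" if "(x, a) \<in> M" for x a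
    unfolding c_def using that \<open>S \<noteq> {}\<close> by (intro cSup_least) (auto intro: S_le)
  have "a + t * c \<le> p (x + t *\<^sub>R y)" if xa: "(x, a) \<in> M" for x a t
  proof -
    consider "t > 0" | "t = 0" | "t < 0"
      by linarith
    then show ?thesis
    proof cases
      case 1
      have "t *\<^sub>R (x /\<^sub>R t + y) = x + t *\<^sub>R y"
        using 1 by (simp add: algebra_simps)
      then have "p (x + t *\<^sub>R y) = t * p (x /\<^sub>R t + y)"
        using hom[OF 1] by metis
      moreover have "c \<le> p (x /\<^sub>R t + y) - a / t"
        using c_le[OF scale[OF xa, of "inverse t"]] by (simp add: divide_inverse_commute)
      ultimately show ?thesis
        using 1 by (simp add: field_simps mult.commute)
    next
      case 3
      have "(- t) *\<^sub>R (x /\<^sub>R (- t) - y) = x + t *\<^sub>R y"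
        using 3 by (simp add: algebra_simps)
      then have "p (x + t *\<^sub>R y) = - t * p (x /\<^sub>R (- t) - y)"
        using hom[of "- t"] 3 by (metis neg_0_less_iff_less)
      moreover have "a / (- t) - p (x /\<^sub>R (- t) - y) \<le> c"
        using c_ge[OF scale[OF xa, of "inverse (- t)"]] by (simp add: divide_inverse_commute)
      ultimately show ?thesis
        using 3 by (simp add: field_simps mult.commute)
    qed (use dom xa in simp)
  qed
  then show ?thesis
    by blast
qed

lemma subspace_Union_chain:
  assumes "\<C> \<noteq> {}" and "\<And>X. X \<in> \<C> \<Longrightarrow> subspace X"
    and "\<And>X Y. X \<in> \<C> \<Longrightarrow> Y \<in> \<C> \<Longrightarrow> X \<subseteq> Y \<or> Y \<subseteq> X"
  shows "subspace (\<Union>\<C>)"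
  unfolding subspace_def
proof (intro conjI ballI allI)
  show "0 \<in> \<Union>\<C>"
    using assms(1,2) subspace_0 by blast
next
  fix u v assume "u \<in> \<Union>\<C>" "v \<in> \<Union>\<C>"
  then obtain X Y where "u \<in> X" "v \<in> Y" "X \<in> \<C>" "Y \<in> \<C>"
    by blast
  then show "u + v \<in> \<Union>\<C>"
    using assms(3)[of X Y] assms(2) subspace_add by blast
next
  fix c u assume "u \<in> \<Union>\<C>"
  then show "c *\<^sub>R u \<in> \<Union>\<C>"
    using assms(2) subspace_scale by blast
qed

lemma hahn_banach_sublinear:
  fixes p :: "'a::real_vector \<Rightarrow> real"
  assumes sub: "\<And>x y. p (x + y) \<le> p x + p y"
    and hom: "\<And>x t. t > 0 \<Longrightarrow> p (t *\<^sub>R x) = t * p x"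
  shows "\<exists>f. linear f \<and> (\<forall>x. f x \<le> p x) \<and> f x0 = p x0"
proof -
  have p0: "p 0 = 0"
    using hom[of 2 0] by simp
  \<comment> \<open>Zorn's lemma on graphs of linear functionals below p, i.e. subspaces of \<open>'a \<times> real\<close>\<close>
  define \<G> where "\<G> = {G. subspace G \<and> (x0, p x0) \<in> G \<and> (\<forall>(x, a) \<in> G. a \<le> p x)}"
  have "\<forall>(x, a) \<in> span {(x0, p x0)}. a \<le> p x"
    using sublinear_scale_ge[OF sub hom] by (auto simp: span_singleton)
  then have "span {(x0, p x0)} \<in> \<G>"
    by (simp add: \<G>_def subspace_span span_base)
  moreover have "\<Union>\<C> \<in> \<G>" if "\<C> \<noteq> {}" "subset.chain \<G> \<C>" for \<C>
  proof -
    have "\<C> \<subseteq> \<G>" and chain: "\<And>X Y. X \<in> \<C> \<Longrightarrow> Y \<in> \<C> \<Longrightarrow> X \<subseteq> Y \<or> Y \<subseteq> X"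
      using that(2) by (auto simp: subset.chain_def)
    then have "subspace (\<Union>\<C>)"
      using subspace_Union_chain[OF that(1) _ chain] by (auto simp: \<G>_def)
    with \<open>\<C> \<subseteq> \<G>\<close> that(1) show ?thesis
      by (fastforce simp: \<G>_def)
  qed
  ultimately obtain M where "M \<in> \<G>" and M_max: "\<And>X. X \<in> \<G> \<Longrightarrow> M \<subseteq> X \<Longrightarrow> X = M"
    using subset_Zorn_nonempty[of \<G>] by blast
  then have M: "subspace M" and M_x0: "(x0, p x0) \<in> M" and M_dom: "\<And>x a. (x, a) \<in> M \<Longrightarrow> a \<le> p x"
    by (auto simp: \<G>_def)
  have M_unique: "a = b" if "(x, a) \<in> M" "(x, b) \<in> M" for x a b
    using M_dom[of 0 "a - b"] M_dom[of 0 "b - a"] subspace_diff[OF M that] subspace_diff[OF M that(2,1)] p0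
    by simp
  have M_total: "\<exists>a. (y, a) \<in> M" for y
  proof (rule ccontr)
    assume y: "\<nexists>a. (y, a) \<in> M"
    obtain c where c: "\<forall>(x, a) \<in> M. \<forall>t. a + t * c \<le> p (x + t *\<^sub>R y)"
      using sublinear_extension_step[OF sub hom M M_dom] by blast
    define M' where "M' = {m + v | m v. m \<in> M \<and> v \<in> span {(y, c)}}"
    have "subspace M'"
      unfolding M'_def by (rule subspace_sums[OF M subspace_span])
    moreover have "M \<subseteq> M'"
      unfolding M'_def using span_zero by (blast intro: exI[of _ 0] add.right_neutral[symmetric])
    moreover have "a \<le> p x" if xa: "(x, a) \<in> M'" for x a
    proof -
      obtain x' a' t where "(x', a') \<in> M" and "(x, a) = (x', a') + t *\<^sub>R (y, c)"
        using xa by (auto simp: M'_def span_singleton)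
      then show ?thesis
        using c by auto
    qed
    ultimately have "M' \<in> \<G>" and "M \<subseteq> M'"
      using M_x0 by (auto simp: \<G>_def)
    moreover have "(y, c) \<in> M'"
      unfolding M'_def using subspace_0[OF M] span_base by (blast intro: add_0_left[symmetric])
    ultimately show False
      using M_max y by blast
  qed
  define f where "f y = (THE a. (y, a) \<in> M)" for y
  have f_graph: "(y, f y) \<in> M" for y
    unfolding f_def using M_total M_unique by (metis theI)
  have "linear f"
  proof (rule linearI)
    show "f (x + y) = f x + f y" for x y
      using subspace_add[OF M f_graph[of x] f_graph[of y]] by (simp add: M_unique[OF f_graph])
    show "f (t *\<^sub>R x) = t *\<^sub>R f x" for t x
      using subspace_scale[OF M f_graph[of x], of t] by (simp add: M_unique[OF f_graph])
  qed
  then show ?thesis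
    using M_dom[OF f_graph] M_unique[OF f_graph M_x0] by blast
qed

section \<open>Separating a point from a convex set\<close>

lemma le_infdistI:
  assumes "A \<noteq> {}" and "\<And>a. a \<in> A \<Longrightarrow> e \<le> dist x a"
  shows "e \<le> infdist x A"
  using assms by (simp add: infdist_notempty cINF_greatest)

lemma infdist_convex_cone_add:
  fixes C :: "'a::real_normed_vector set"
  assumes C: "convex_cone C"
  shows "infdist (x + y) C \<le> infdist x C + infdist y C"
proof -
  have "infdist (x + y) C - dist y b \<le> infdist x C" if b: "b \<in> C" for b
  proof (rule le_infdistI)
    show "C \<noteq> {}"
      using b by blast
    fix a assume "a \<in> C"
    then have "infdist (x + y) C \<le> dist (x + y) (a + b)"
      using b by (intro infdist_le convex_cone_add[OF C])
    also have "\<dots> \<le> dist x a + dist y b"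
      using norm_triangle_ineq[of "x - a" "y - b"] by (simp add: dist_norm add_diff_add)
    finally show "infdist (x + y) C - dist y b \<le> dist x a"
      by simp
  qed
  then have "infdist (x + y) C - infdist x C \<le> infdist y C"
    using C by (intro le_infdistI) (auto simp: convex_cone_nonempty algebra_simps)
  then show ?thesis
    by simp
qed

lemma infdist_convex_cone_scaleR:
  fixes C :: "'a::real_normed_vector set"
  assumes C: "convex_cone C" and t: "t > 0"
  shows "infdist (t *\<^sub>R x) C = t * infdist x C"
proof -
  have le: "infdist (s *\<^sub>R u) C \<le> s * infdist u C" if "s > 0" for s u
  proof -
    have "infdist (s *\<^sub>R u) C / s \<le> infdist u C"
    proof (rule le_infdistI)
      show "C \<noteq> {}"
        using C by (rule convex_cone_nonempty)
      fix a assume "a \<in> C"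
      then have "infdist (s *\<^sub>R u) C \<le> dist (s *\<^sub>R u) (s *\<^sub>R a)"
        using \<open>s > 0\<close> by (intro infdist_le convex_cone_scaleR[OF C]) auto
      also have "\<dots> = s * dist u a"
        using \<open>s > 0\<close> by (simp add: dist_norm scaleR_diff_right[symmetric])
      finally show "infdist (s *\<^sub>R u) C / s \<le> dist u a"
        using \<open>s > 0\<close> by (simp add: divide_le_eq mult.commute)
    qed
    then show ?thesis
      using \<open>s > 0\<close> by (simp add: divide_le_eq mult.commute)
  qed
  have "t * infdist x C = t * infdist (inverse t *\<^sub>R (t *\<^sub>R x)) C"
    using t by simp
  also have "\<dots> \<le> infdist (t *\<^sub>R x) C"
    using le[of "inverse t" "t *\<^sub>R x"] t by (simp add: field_simps)
  finally show ?thesis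
    using le[OF t, of x] by linarith
qed

lemma dist_cone_of_translate_ge:
  fixes K :: "'a::real_normed_vector set"
  assumes K: "convex K" "k0 \<in> K" "k \<in> K" and r: "\<And>k. k \<in> K \<Longrightarrow> r \<le> dist z k"
    and s: "s \<ge> 0"
  shows "r \<le> dist (z - k0) (s *\<^sub>R (k - z))"
proof -
  define k' where "k' = (1 / (1 + s)) *\<^sub>R k0 + (s / (1 + s)) *\<^sub>R k"
  have "k' \<in> K"
    unfolding k'_def using K s by (intro convexD) (auto simp: add_divide_distrib[symmetric])
  have "(1 + s) *\<^sub>R k' = k0 + s *\<^sub>R k"
    using s by (simp add: k'_def scaleR_add_right)
  then have "(1 + s) *\<^sub>R (z - k') = (z - k0) - s *\<^sub>R (k - z)"
    by (simp add: algebra_simps)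
  then have "dist (z - k0) (s *\<^sub>R (k - z)) = (1 + s) * dist z k'"
    using s by (metis dist_norm norm_scaleR abs_of_nonneg add_nonneg_nonneg zero_le_one)
  moreover have "r \<le> dist z k'"
    using r[OF \<open>k' \<in> K\<close>] .
  moreover have "dist z k' \<le> (1 + s) * dist z k'"
    using s by (simp add: distrib_right)
  ultimately show ?thesis
    by linarith
qed

lemma separating_functional_point_convex:
  fixes K :: "'a::real_normed_vector set"
  assumes nontriv: "\<exists>v::'a. v \<noteq> 0" and K: "convex K" and z: "z \<notin> closure K"
  shows "\<exists>g::'a \<Rightarrow> real. bounded_linear g \<and> onorm g = 1 \<and> (\<forall>k\<in>K. g k \<le> g z)"
proof -
  \<comment> \<open>The distance p to the cone spanned by K - z is sublinear, below the norm, zero on K - z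
    and positive somewhere; a Hahn-Banach functional f \<le> p with f x0 = p x0 > 0 separates.\<close>
  define C where "C = convex_cone hull ((\<lambda>k. k - z) ` K)"
  define p where "p x = infdist x C" for x
  have C: "convex_cone C"
    unfolding C_def by (rule convex_cone_convex_cone_hull)
  have p_norm: "p x \<le> norm x" for x
    using infdist_le[OF convex_cone_contains_0[OF C], of x] by (simp add: p_def)
  have p_K: "p (k - z) = 0" if "k \<in> K" for k
    using that by (simp add: p_def C_def hull_inc)
  obtain x0 where "p x0 > 0"
  proof (cases "K = {}")
    case True
    obtain v :: 'a where "v \<noteq> 0"
      using nontriv by blast
    with True show ?thesis
      using that[of v] by (simp add: p_def C_def)
  next
    case False
    then obtain k0 where k0: "k0 \<in> K"
      by blast
    obtain r where "r > 0" and r: "\<And>k. k \<in> K \<Longrightarrow> r \<le> dist z k"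
      using z unfolding closure_approachable by (force simp: dist_commute not_less)
    have "convex hull ((\<lambda>k. k - z) ` K) = (\<lambda>k. k - z) ` K"
      using K by (simp add: convex_hull_eq)
    then have C_repr: "\<exists>s\<ge>0. \<exists>k\<in>K. a = s *\<^sub>R (k - z)" if "a \<in> C" for a
      using that by (auto simp: C_def convex_cone_hull_convex_hull) (use k0 in \<open>auto intro!: exI[of _ "0::real"]\<close>)
    then have "r \<le> p (z - k0)"
      unfolding p_def
    proof (intro le_infdistI)
      show "C \<noteq> {}"
        using C by (rule convex_cone_nonempty)
      fix a assume "a \<in> C"
      then obtain s k where "s \<ge> 0" "k \<in> K" "a = s *\<^sub>R (k - z)"
        using C_repr by blast
      then show "r \<le> dist (z - k0) a"
        using dist_cone_of_translate_ge[OF K k0 _ r] by simp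
    qed
    with \<open>r > 0\<close> show ?thesis
      using that[of "z - k0"] by simp
  qed
  obtain f where f: "linear f" and f_le: "\<And>x. f x \<le> p x" and "f x0 = p x0"
    using hahn_banach_sublinear[of p x0] infdist_convex_cone_add[OF C] infdist_convex_cone_scaleR[OF C]
    unfolding p_def by blast
  have "\<bar>f x\<bar> \<le> norm x" for x
    using f_le[of x] f_le[of "- x"] p_norm[of x] p_norm[of "- x"] linear_neg[OF f] by simp
  then have f_bl: "bounded_linear f"
    using f by (intro bounded_linear_intro[of f 1]) (auto simp: linear_add linear_scale)
  have "onorm f > 0"
    using onorm_pos_lt[OF f_bl] \<open>f x0 = p x0\<close> \<open>p x0 > 0\<close> by force
  define g where "g = (\<lambda>x. f x / onorm f)"
  have "bounded_linear g"
    unfolding g_def by (rule bounded_linear_compose[OF bounded_linear_divide f_bl])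
  moreover have "onorm g = 1"
    using onorm_scaleR[OF f_bl, of "inverse (onorm f)"] \<open>onorm f > 0\<close>
    by (simp add: g_def divide_inverse mult.commute)
  moreover have "g k \<le> g z" if "k \<in> K" for k
    using f_le[of "k - z"] p_K[OF that] linear_diff[OF f] \<open>onorm f > 0\<close>
    by (simp add: g_def divide_right_mono)
  ultimately show ?thesis
    by blast
qed

section \<open>Rational convex hulls\<close>

lemma subset_rat_convex_hull: "A \<subseteq> rat_convex_hull A"
proof
  fix a assume "a \<in> A"
  then show "a \<in> rat_convex_hull A"
    unfolding rat_convex_hull_def
    by (intro CollectI exI[of _ "{0::nat}"] exI[of _ "\<lambda>_. 1::real"] exI[of _ "\<lambda>_. a"]) simp
qed

lemma rat_convex_hull_subset_convex_hull: "rat_convex_hull A \<subseteq> convex hull A"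
  unfolding rat_convex_hull_def
  by (force intro: convex_sum convex_convex_hull hull_inc)

lemma rat_convex_hull_convex_combination:
  assumes u: "u \<in> rat_convex_hull A" and w: "w \<in> rat_convex_hull A"
    and q: "q \<in> \<rat>" "0 \<le> q" "q \<le> 1"
  shows "q *\<^sub>R u + (1 - q) *\<^sub>R w \<in> rat_convex_hull A"
proof -
  obtain I :: "nat set" and c x where I: "finite I" "\<forall>i\<in>I. c i \<in> \<rat> \<and> c i \<ge> 0 \<and> x i \<in> A"
    "sum c I = 1" "u = (\<Sum>i\<in>I. c i *\<^sub>R x i)"
    using u unfolding rat_convex_hull_def by blast
  obtain J :: "nat set" and d y where J: "finite J" "\<forall>i\<in>J. d i \<in> \<rat> \<and> d i \<ge> 0 \<and> y i \<in> A"
    "sum d J = 1" "w = (\<Sum>i\<in>J. d i *\<^sub>R y i)"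
    using w unfolding rat_convex_hull_def by blast
  define L where "L = (\<lambda>i. 2 * i) ` I \<union> (\<lambda>i. 2 * i + 1) ` J"
  define e where "e i = (if even i then q * c (i div 2) else (1 - q) * d (i div 2))" for i :: nat
  define z where "z i = (if even i then x (i div 2) else y (i div 2))" for i :: nat
  have sum_L: "sum h L = (\<Sum>i\<in>I. h (2 * i)) + (\<Sum>i\<in>J. h (2 * i + 1))"
    for h :: "nat \<Rightarrow> 'b::comm_monoid_add"
  proof -
    have "(\<lambda>i. 2 * i) ` I \<inter> (\<lambda>i. 2 * i + 1) ` J = {}"
      by auto presburger
    then have "sum h L = sum h ((\<lambda>i. 2 * i) ` I) + sum h ((\<lambda>i. 2 * i + 1) ` J)"
      unfolding L_def using I(1) J(1) by (intro sum.union_disjoint) auto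
    also have "\<dots> = (\<Sum>i\<in>I. h (2 * i)) + (\<Sum>i\<in>J. h (2 * i + 1))"
      by (simp add: sum.reindex inj_on_def)
    finally show ?thesis .
  qed
  have "finite L"
    unfolding L_def using I(1) J(1) by simp
  moreover have "\<forall>i\<in>L. e i \<in> \<rat> \<and> e i \<ge> 0 \<and> z i \<in> A"
    unfolding L_def e_def z_def using I(2) J(2) q by auto
  moreover have "sum e L = 1"
    unfolding sum_L e_def using I(3) J(3) by (simp add: sum_distrib_left[symmetric])
  moreover have "q *\<^sub>R u + (1 - q) *\<^sub>R w = (\<Sum>i\<in>L. e i *\<^sub>R z i)"
    unfolding sum_L e_def z_def I(4) J(4) by (simp add: scaleR_sum_right)
  ultimately show ?thesis
    unfolding rat_convex_hull_def by blast
qed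

lemma convex_closed_rat_convex_hull: "convex (closed_rat_convex_hull A)"
  unfolding closed_rat_convex_hull_def
proof (rule convexI)
  fix a b and u v :: real
  assume a: "a \<in> closure (rat_convex_hull A)" and b: "b \<in> closure (rat_convex_hull A)"
    and uv: "0 \<le> u" "0 \<le> v" "u + v = 1"
  obtain \<alpha> where \<alpha>: "\<And>n. \<alpha> n \<in> rat_convex_hull A" "\<alpha> \<longlonglongrightarrow> a"
    using a unfolding closure_sequential by blast
  obtain \<beta> where \<beta>: "\<And>n. \<beta> n \<in> rat_convex_hull A" "\<beta> \<longlonglongrightarrow> b"
    using b unfolding closure_sequential by blast
  obtain r where r: "\<And>n. r n \<in> \<rat>" "r \<longlonglongrightarrow> u"
    using Rats_closure_real closure_sequential by (metis UNIV_I)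
  define q where "q n = max 0 (min 1 (r n))" for n
  have q: "q n \<in> \<rat>" "0 \<le> q n" "q n \<le> 1" for n
    using r(1)[of n] by (auto simp: q_def max_def min_def)
  have "q \<longlonglongrightarrow> max 0 (min 1 u)"
    unfolding q_def by (intro tendsto_intros r(2))
  then have "q \<longlonglongrightarrow> u"
    using uv by simp
  have "v = 1 - u"
    using uv by simp
  then have "(\<lambda>n. q n *\<^sub>R \<alpha> n + (1 - q n) *\<^sub>R \<beta> n) \<longlonglongrightarrow> u *\<^sub>R a + v *\<^sub>R b"
    by (auto intro!: tendsto_intros \<open>q \<longlonglongrightarrow> u\<close> \<alpha>(2) \<beta>(2))
  moreover have "q n *\<^sub>R \<alpha> n + (1 - q n) *\<^sub>R \<beta> n \<in> rat_convex_hull A" for n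
    using rat_convex_hull_convex_combination[OF \<alpha>(1) \<beta>(1) q] .
  ultimately show "u *\<^sub>R a + v *\<^sub>R b \<in> closure (rat_convex_hull A)"
    unfolding closure_sequential by (intro exI[of _ "\<lambda>n. q n *\<^sub>R \<alpha> n + (1 - q n) *\<^sub>R \<beta> n"]) blast
qed

section \<open>Slices and the local diameter property\<close>

lemma convex_hull_linear_gt:
  assumes f: "linear (f :: 'a::real_vector \<Rightarrow> real)" and w: "w \<in> convex hull A" and "c < f w"
  shows "\<exists>a\<in>A. c < f a"
proof (rule ccontr)
  assume "\<not> (\<exists>a\<in>A. c < f a)"
  then have "A \<subseteq> f -` {..c}"
    by (auto simp: not_less)
  then have "convex hull A \<subseteq> f -` {..c}"
    by (intro hull_minimal convex_linear_vimage[OF f] convex_real_interval)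
  with w \<open>c < f w\<close> show False
    by auto
qed

lemma dense_meets_open_near_unit_ball:
  fixes D :: "'a::real_normed_vector set"
  assumes D: "closure D = UNIV" and U: "open U" "x \<in> U" and x: "norm x \<le> 1"
  shows "\<exists>y\<in>D. norm y < 1 \<and> y \<in> U"
proof -
  have "x \<in> closure (ball 0 1)"
    using x by simp
  with U have "U \<inter> ball 0 1 \<noteq> {}"
    using open_Int_closure_eq_empty[OF U(1)] by blast
  then have "U \<inter> ball 0 1 \<inter> closure D \<noteq> {}"
    using D by simp
  then have "U \<inter> ball 0 1 \<inter> D \<noteq> {}"
    using open_Int_closure_eq_empty[of "U \<inter> ball 0 1" D] U(1) by blast
  then show ?thesis
    by auto
qed

lemma onorm_approx_unit_ball:
  fixes f :: "'a::real_normed_vector \<Rightarrow> real"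
  assumes f: "bounded_linear f" and e: "e > 0"
  shows "\<exists>x. norm x \<le> 1 \<and> onorm f - e < f x"
proof -
  have bdd: "bdd_above (range (\<lambda>x. norm (f x) / norm x))"
    using le_onorm[OF f] by (intro bdd_aboveI2[where M = "onorm f"]) simp
  have "onorm f - e < (SUP x. norm (f x) / norm x)"
    using e unfolding onorm_def by simp
  then obtain x where "onorm f - e < norm (f x) / norm x"
    using less_cSUP_iff[OF UNIV_not_empty bdd] by blast
  then have x: "onorm f - e < \<bar>f x\<bar> / norm x"
    by simp
  define u where "u = (sgn (f x) / norm x) *\<^sub>R x"
  have "norm u \<le> 1"
    by (cases "x = 0") (auto simp: u_def abs_sgn_eq)
  moreover have "f u = \<bar>f x\<bar> / norm x"
    using linear_scale[OF bounded_linear.linear[OF f]] by (simp add: u_def abs_sgn mult.commute)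
  ultimately show ?thesis
    using x by auto
qed

lemma bounded_slice: "bounded (slice f \<alpha>)"
  unfolding slice_def by (rule bounded_subset[OF bounded_cball[of 0 1]]) auto

lemma mem_slice_if_midpoint_gt:
  fixes f :: "'a::real_normed_vector \<Rightarrow> real"
  assumes f: "bounded_linear f" "onorm f = 1" and "norm x \<le> 1" "norm y \<le> 1"
    and mid: "1 - \<alpha> / 2 < f ((x + y) /\<^sub>R 2)"
  shows "x \<in> slice f \<alpha>"
proof -
  have "f y \<le> 1"
    using onorm[OF f(1), of y] \<open>norm y \<le> 1\<close> f(2) by simp
  moreover have "f ((x + y) /\<^sub>R 2) = (f x + f y) / 2"
    using linear_scale[OF bounded_linear.linear[OF f(1)]] linear_add[OF bounded_linear.linear[OF f(1)]]
    by simp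
  ultimately show ?thesis
    using mid \<open>norm x \<le> 1\<close> by (simp add: slice_def)
qed

definition far_midpoints :: "'a::real_normed_vector set \<Rightarrow> real \<Rightarrow> 'a set" where
  "far_midpoints D d =
     {(x + y) /\<^sub>R 2 | x y. x \<in> ball 0 1 \<inter> D \<and> y \<in> ball 0 1 \<inter> D \<and> norm (x - y) > d}"

lemma LDP_imp_mem_closed_rat_convex_hull:
  fixes D :: "'a::real_normed_vector set"
  assumes nontriv: "\<exists>v::'a. v \<noteq> 0" and LDP: "LDP \<delta> TYPE('a)" and "0 < \<delta>"
    and D: "closure D = UNIV" and "\<epsilon> > 0" and "norm z < 1"
  shows "z \<in> closed_rat_convex_hull (far_midpoints D (\<delta> - \<epsilon>))"
proof (rule ccontr)
  define K where "K = closed_rat_convex_hull (far_midpoints D (\<delta> - \<epsilon>))"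
  assume "z \<notin> K"
  then have "z \<notin> closure K"
    by (simp add: K_def closed_rat_convex_hull_def)
  then obtain g :: "'a \<Rightarrow> real" where g: "bounded_linear g" "onorm g = 1" and g_le: "\<And>k. k \<in> K \<Longrightarrow> g k \<le> g z"
    using separating_functional_point_convex[OF nontriv convex_closed_rat_convex_hull] K_def by blast
  define c where "c = g z"
  have "c < 1"
    using onorm[OF g(1), of z] g(2) \<open>norm z < 1\<close> by (simp add: c_def)
  then have "\<delta> \<le> diameter (slice g (1 - c))"
    using LDP g unfolding LDP_def by simp
  \<comment> \<open>diameter_lower_bounded needs a positive bound\<close>
  then have "max (\<delta> - \<epsilon> / 2) (\<delta> / 2) < diameter (slice g (1 - c))"
    using \<open>0 < \<delta>\<close> \<open>\<epsilon> > 0\<close> by simp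
  moreover have "0 < max (\<delta> - \<epsilon> / 2) (\<delta> / 2)"
    using \<open>0 < \<delta>\<close> by simp
  ultimately obtain x y where x: "x \<in> slice g (1 - c)" and y: "y \<in> slice g (1 - c)"
    and xy: "max (\<delta> - \<epsilon> / 2) (\<delta> / 2) < dist x y"
    using diameter_lower_bounded[OF bounded_slice] by blast
  have approx: "\<exists>v\<in>D. norm v < 1 \<and> v \<in> ball u (\<epsilon> / 4) \<inter> {v. c < g v}" if "u \<in> slice g (1 - c)" for u
    using that \<open>\<epsilon> > 0\<close> g(1)
    by (intro dense_meets_open_near_unit_ball[OF D])
      (auto simp: slice_def intro!: open_Int open_Collect_less continuous_intros linear_continuous_on)
  obtain x' y' where "x' \<in> D" "norm x' < 1" "dist x x' < \<epsilon> / 4" "c < g x'"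
    and "y' \<in> D" "norm y' < 1" "dist y y' < \<epsilon> / 4" "c < g y'"
    using approx[OF x] approx[OF y] by auto
  moreover have "\<delta> - \<epsilon> < dist x' y'"
    using xy \<open>dist x x' < \<epsilon> / 4\<close> \<open>dist y y' < \<epsilon> / 4\<close>
      dist_triangle[of x y x'] dist_triangle[of x' y y'] dist_commute[of y y']
    by linarith
  ultimately have "(x' + y') /\<^sub>R 2 \<in> far_midpoints D (\<delta> - \<epsilon>)"
    unfolding far_midpoints_def dist_norm by (intro CollectI exI[of _ x'] exI[of _ y']) simp
  then have "(x' + y') /\<^sub>R 2 \<in> K"
    unfolding K_def closed_rat_convex_hull_def using subset_rat_convex_hull closure_subset by blast
  then have "g ((x' + y') /\<^sub>R 2) \<le> c"
    using g_le c_def by blast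
  moreover have "g ((x' + y') /\<^sub>R 2) = (g x' + g y') / 2"
    using linear_scale[OF bounded_linear.linear[OF g(1)]] linear_add[OF bounded_linear.linear[OF g(1)]]
    by simp
  ultimately show False
    using \<open>c < g x'\<close> \<open>c < g y'\<close> by simp
qed

lemma mem_closed_rat_convex_hull_imp_LDP:
  fixes D :: "'a::real_normed_vector set"
  assumes D: "closure D = UNIV"
    and hull: "\<And>\<epsilon> z. \<epsilon> > 0 \<Longrightarrow> z \<in> D \<Longrightarrow> norm z < 1 \<Longrightarrow>
      z \<in> closed_rat_convex_hull (far_midpoints D (\<delta> - \<epsilon>))"
  shows "LDP \<delta> TYPE('a)"
  unfolding LDP_def
proof (intro allI impI, elim conjE)
  fix f :: "'a \<Rightarrow> real" and \<alpha> :: real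
  assume f: "bounded_linear f" "onorm f = 1" and "\<alpha> > 0"
  define U where "U = {v. 1 - \<alpha> / 2 < f v}"
  have U: "open U"
    unfolding U_def by (intro open_Collect_less continuous_on_const linear_continuous_on f(1))
  obtain u where "norm u \<le> 1" "u \<in> U"
    using onorm_approx_unit_ball[OF f(1), of "\<alpha> / 2"] f(2) \<open>\<alpha> > 0\<close> by (auto simp: U_def)
  then obtain z where "z \<in> D" "norm z < 1" "z \<in> U"
    using dense_meets_open_near_unit_ball[OF D U] by blast
  have diameter_gt: "\<delta> - \<epsilon> < diameter (slice f \<alpha>)" if "\<epsilon> > 0" for \<epsilon>
  proof -
    have "z \<in> closure (rat_convex_hull (far_midpoints D (\<delta> - \<epsilon>)))"
      using hull[OF that \<open>z \<in> D\<close> \<open>norm z < 1\<close>] by (simp add: closed_rat_convex_hull_def)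
    then obtain w where w: "w \<in> rat_convex_hull (far_midpoints D (\<delta> - \<epsilon>))" "w \<in> U"
      using open_Int_closure_eq_empty[OF U] \<open>z \<in> U\<close> by blast
    have "w \<in> convex hull (far_midpoints D (\<delta> - \<epsilon>))"
      using w(1) rat_convex_hull_subset_convex_hull by blast
    then obtain m where "m \<in> far_midpoints D (\<delta> - \<epsilon>)" "1 - \<alpha> / 2 < f m"
      using convex_hull_linear_gt[OF bounded_linear.linear[OF f(1)]] w(2) unfolding U_def by blast
    then obtain x y where "norm x < 1" "norm y < 1" "\<delta> - \<epsilon> < dist x y"
      and "1 - \<alpha> / 2 < f ((x + y) /\<^sub>R 2)"
      unfolding far_midpoints_def dist_norm by auto
    then have "x \<in> slice f \<alpha>" and "y \<in> slice f \<alpha>"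
      using mem_slice_if_midpoint_gt[OF f, of x y] mem_slice_if_midpoint_gt[OF f, of y x] by (simp_all add: add.commute)
    with \<open>\<delta> - \<epsilon> < dist x y\<close> show ?thesis
      using diameter_bounded_bound[OF bounded_slice] by fastforce
  qed
  show "\<delta> \<le> diameter (slice f \<alpha>)"
  proof (rule field_le_epsilon)
    fix e :: real
    assume "0 < e"
    then show "\<delta> \<le> diameter (slice f \<alpha>) + e"
      using diameter_gt[of e] by linarith
  qed
qed

theorem lemma5p2:
  fixes \<delta> :: real and D :: "'a::banach set"
  assumes nontriv: "\<exists>v::'a. v \<noteq> 0"
    and "0 < \<delta>" and "\<delta> \<le> 2"
    and dense: "closure D = UNIV"
  shows "LDP \<delta> TYPE('a) \<longleftrightarrow>
    (\<forall>\<epsilon>>0. \<forall>z\<in>D. norm z \<ge> 1 \<or>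
       z \<in> closed_rat_convex_hull
             {(x + y) /\<^sub>R 2 | x y. x \<in> ball 0 1 \<inter> D \<and> y \<in> ball 0 1 \<inter> D \<and> norm (x - y) > \<delta> - \<epsilon>})"
  unfolding far_midpoints_def[symmetric]
proof
  assume "LDP \<delta> TYPE('a)"
  then show "\<forall>\<epsilon>>0. \<forall>z\<in>D. 1 \<le> norm z \<or> z \<in> closed_rat_convex_hull (far_midpoints D (\<delta> - \<epsilon>))"
    using LDP_imp_mem_closed_rat_convex_hull[OF nontriv _ \<open>0 < \<delta>\<close> dense] by (meson not_le)
next
  assume "\<forall>\<epsilon>>0. \<forall>z\<in>D. 1 \<le> norm z \<or> z \<in> closed_rat_convex_hull (far_midpoints D (\<delta> - \<epsilon>))"
  then show "LDP \<delta> TYPE('a)"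
    using mem_closed_rat_convex_hull_imp_LDP[OF dense] by (meson not_le)
qed

end
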